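(* In the curved-exam game described in the context, each payoff $U_i(x_i,x_{-i})$ is non-increasing in every opponent's effort $x_j$, $j\ne i$ (negative spillovers). Moreover, the game has at least one pure-strategy Nash equilibrium, and there exist pure Nash equilibria $x^*$ and $y^*$ such that every pure Nash equilibrium $x^e$ satisfies $x^*_i\le x^e_i\le y^*_i$ for all $i=1,\dots,n$.
   Context: The curved-exam game $\Gamma_n$: fix an integer $n\ge 2$, ability parameters $\alpha_1,\dots,\alpha_n\in(0,1)$ and a target mean $m\in(0,1)$. Each student $i\in\{1,\dots,n\}$ chooses $x_i\in[0,1]$; $\bar x=\frac1n\sum_j x_j$, $\bar x_{-i}=\frac1{n-1}\sum_{j\ne i}x_j$. Grade $G_i(x)=x_i+\max(m-\bar x,0)=\max\big(m+\frac{n-1}{n}(x_i-\bar x_{-i}),x_i\big)$ (not truncated at 1); payoff $U_i(x)=G_i(x)^{\alpha_i}(1-x_i)^{1-\alpha_i}$. A pure Nash equilibrium is a profile $x\in[0,1]^n$ such that for every $i$, $U_i(x)\ge U_i(x_i',x_{-i})$ for all $x_i'\in[0,1]$. *)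

theory Defs
  imports "HOL-Analysis.Analysis"
begin

text \<open>Students are indexed by 0..<n; a strategy profile is a function nat => real,
  of which only the values at indices < n matter.\<close>

definition mean_eff :: "nat \<Rightarrow> (nat \<Rightarrow> real) \<Rightarrow> real" where
  "mean_eff n x = (\<Sum>j<n. x j) / real n"

definition grade :: "nat \<Rightarrow> real \<Rightarrow> (nat \<Rightarrow> real) \<Rightarrow> nat \<Rightarrow> real" where
  "grade n m x i = x i + max (m - mean_eff n x) 0"

definition payoff :: "nat \<Rightarrow> (nat \<Rightarrow> real) \<Rightarrow> real \<Rightarrow> (nat \<Rightarrow> real) \<Rightarrow> nat \<Rightarrow> real" where
  "payoff n \<alpha> m x i = (grade n m x i) powr (\<alpha> i) * (1 - x i) powr (1 - \<alpha> i)"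

definition profile :: "nat \<Rightarrow> (nat \<Rightarrow> real) \<Rightarrow> bool" where
  "profile n x \<longleftrightarrow> (\<forall>i<n. 0 \<le> x i \<and> x i \<le> 1)"

definition is_pure_NE :: "nat \<Rightarrow> (nat \<Rightarrow> real) \<Rightarrow> real \<Rightarrow> (nat \<Rightarrow> real) \<Rightarrow> bool" where
  "is_pure_NE n \<alpha> m x \<longleftrightarrow> profile n x \<and>
     (\<forall>i<n. \<forall>t\<in>{0..1}. payoff n \<alpha> m (x(i := t)) i \<le> payoff n \<alpha> m x i)"

end

theory Submission
  imports Defs
begin

text \<open>
  Raising one's effort lowers the grade of everybody else, but the game has strategic
  complements. If the others exert total effort \<open>T\<close>, player \<open>i\<close> faces the payoff
  \<open>G(T,t)^\<alpha> (1 - t)^(1 - \<alpha>)\<close> with \<open>G(T,t) = t + max (m - (t + T)/n) 0\<close>, and \<open>G\<close> is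
  log-supermodular in \<open>(t,T)\<close>: it is nondecreasing in \<open>t\<close>, nonincreasing in \<open>T\<close>, and the
  convexity of \<open>max _ 0\<close> makes its decrease in \<open>T\<close> smaller for larger \<open>t\<close>. By Topkis'
  argument the largest and the smallest best replies are therefore nondecreasing in \<open>T\<close>,
  hence nondecreasing self-maps of the box \<open>[0,1]\<^sup>n\<close>. Tarski's construction (the supremum
  of all profiles below their image, the infimum of all profiles above it) yields
  the greatest and the least equilibrium.
\<close>

definition maximizers :: "('a \<Rightarrow> real) \<Rightarrow> 'a set \<Rightarrow> 'a set" where
  "maximizers f S = {t \<in> S. \<forall>s\<in>S. f s \<le> f t}"

lemma
  fixes f :: "real \<Rightarrow> real"
  assumes "compact S" "S \<noteq> {}" "continuous_on S f"
  shows Sup_maximizers_mem: "Sup (maximizers f S) \<in> maximizers f S"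
    and Inf_maximizers_mem: "Inf (maximizers f S) \<in> maximizers f S"
proof -
  obtain t0 where t0: "t0 \<in> S" "\<forall>s\<in>S. f s \<le> f t0"
    using continuous_attains_sup[OF assms] by blast
  have eq: "maximizers f S = S \<inter> f -` {f t0..}"
    unfolding maximizers_def using t0 by force
  have "closed (maximizers f S)"
    unfolding eq using assms by (intro continuous_closed_preimage) (auto intro: compact_imp_closed)
  moreover have "maximizers f S \<noteq> {}" "bounded (maximizers f S)"
    using t0 compact_imp_bounded[OF assms(1)] unfolding eq by (auto intro: bounded_subset)
  ultimately show "Sup (maximizers f S) \<in> maximizers f S" "Inf (maximizers f S) \<in> maximizers f S"
    by (auto intro!: closed_contains_Sup closed_contains_Inf bounded_imp_bdd_above bounded_imp_bdd_below)
qed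

lemma maximizers_strong_set_order:
  fixes f g :: "real \<Rightarrow> real"
  assumes log_supermodular: "\<And>t t'. t' \<le> t \<Longrightarrow> t \<in> S \<Longrightarrow> t' \<in> S \<Longrightarrow> f t * g t' \<le> g t * f t'"
    and nonneg: "\<And>s. s \<in> S \<Longrightarrow> 0 \<le> f s" "\<And>s. s \<in> S \<Longrightarrow> 0 \<le> g s"
    and t: "t \<in> maximizers f S" "0 < f t"
    and t': "t' \<in> maximizers g S" "0 < g t'"
  shows "max t t' \<in> maximizers g S \<and> min t t' \<in> maximizers f S"
proof (cases "t \<le> t'")
  case True
  then show ?thesis using t t' by (simp add: max_def min_def)
next
  case False
  have S: "t \<in> S" "t' \<in> S" and opt: "f t' \<le> f t" "g t \<le> g t'"
    using t t' unfolding maximizers_def by auto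
  have "f t * g t' \<le> g t * f t'" using log_supermodular False S by simp
  also have "\<dots> \<le> g t * f t" using opt nonneg S by (simp add: mult_left_mono)
  finally have "g t' \<le> g t" using t by (simp add: mult.commute)
  then have "t \<in> maximizers g S" using t' S unfolding maximizers_def by force
  have "f t * g t' \<le> g t * f t'" using log_supermodular False S by simp
  also have "\<dots> \<le> g t' * f t'" using opt nonneg S by (simp add: mult_right_mono)
  finally have "f t \<le> f t'" using t' by (simp add: mult.commute)
  then have "t' \<in> maximizers f S" using t S unfolding maximizers_def by force
  show ?thesis using \<open>t \<in> maximizers g S\<close> \<open>t' \<in> maximizers f S\<close> False by (simp add: max_def min_def)
qed

lemma mult_le_mult_of_increments:
  fixes a b c d :: real
  assumes "0 \<le> b" "b \<le> c" "b \<le> d" "a - c \<le> d - b"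
  shows "a * b \<le> c * d"
proof -
  have "a * b \<le> (c + d - b) * b" using assms by (intro mult_right_mono) auto
  also have "\<dots> = c * d - (c - b) * (d - b)" by (simp add: algebra_simps)
  also have "\<dots> \<le> c * d" using assms by simp
  finally show ?thesis .
qed

lemma max_zero_increment_mono:
  fixes x y h :: real
  assumes "x \<le> y" "0 \<le> h"
  shows "max (x + h) 0 - max x 0 \<le> max (y + h) 0 - max y 0"
  using assms by (auto simp: max_def)

lemma divide_of_nat_le_self: "0 \<le> x \<Longrightarrow> x / real n \<le> (x::real)"
  by (cases "n = 0") (auto simp: divide_le_eq intro: mult_le_cancel_left1[THEN iffD2])

definition others_sum :: "nat \<Rightarrow> (nat \<Rightarrow> real) \<Rightarrow> nat \<Rightarrow> real" where
  "others_sum n x i = (\<Sum>j\<in>{..<n} - {i}. x j)"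

lemma monotone_profile_map_greatest_fixpoint:
  fixes F :: "(nat \<Rightarrow> real) \<Rightarrow> nat \<Rightarrow> real"
  assumes mono: "\<And>x y. \<forall>j<n. x j \<le> y j \<Longrightarrow> \<forall>i<n. F x i \<le> F y i"
    and maps: "\<And>x. profile n x \<Longrightarrow> profile n (F x)"
  obtains y where "profile n y" "\<forall>i<n. F y i = y i"
    "\<And>x. profile n x \<Longrightarrow> \<forall>i<n. x i \<le> F x i \<Longrightarrow> \<forall>i<n. x i \<le> y i"
proof -
  define D where "D = {x. profile n x \<and> (\<forall>i<n. x i \<le> F x i)}"
  define y where "y i = Sup ((\<lambda>x. x i) ` D)" for i
  have zero: "(\<lambda>_. 0) \<in> D"
    using maps[of "\<lambda>_. 0"] unfolding D_def profile_def by auto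
  have upper: "x i \<le> y i" if "x \<in> D" "i < n" for x i
    unfolding y_def using that
    by (intro cSup_upper bdd_aboveI[where M = 1]) (auto simp: D_def profile_def)
  have y_profile: "profile n y"
    using upper[OF zero] zero unfolding profile_def
    by (auto simp: y_def D_def profile_def intro!: cSup_least)
  have y_le_Fy: "\<forall>i<n. y i \<le> F y i"
  proof (intro allI impI)
    fix i assume "i < n"
    have "x i \<le> F y i" if "x \<in> D" for x
      using that \<open>i < n\<close> mono[of x y] upper[OF that] order_trans unfolding D_def by blast
    then show "y i \<le> F y i" unfolding y_def using zero by (auto intro!: cSup_least)
  qed
  have "F y \<in> D"
    using maps[OF y_profile] mono[OF y_le_Fy] unfolding D_def by blast
  then have "\<forall>i<n. F y i = y i"
    using upper y_le_Fy by (auto intro: antisym)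
  moreover have "\<forall>i<n. x i \<le> y i" if "profile n x" "\<forall>i<n. x i \<le> F x i" for x
    using upper that unfolding D_def by blast
  ultimately show thesis using that y_profile by blast
qed

text \<open>The least fixed point is the greatest one of the reflected map \<open>x \<mapsto> 1 - F (1 - x)\<close>.\<close>

lemma monotone_profile_map_least_fixpoint:
  fixes F :: "(nat \<Rightarrow> real) \<Rightarrow> nat \<Rightarrow> real"
  assumes mono: "\<And>x y. \<forall>j<n. x j \<le> y j \<Longrightarrow> \<forall>i<n. F x i \<le> F y i"
    and maps: "\<And>x. profile n x \<Longrightarrow> profile n (F x)"
  obtains w where "profile n w" "\<forall>i<n. F w i = w i"
    "\<And>x. profile n x \<Longrightarrow> \<forall>i<n. F x i \<le> x i \<Longrightarrow> \<forall>i<n. w i \<le> x i"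
proof -
  define G where "G x i = 1 - F (\<lambda>j. 1 - x j) i" for x i
  have reflect: "profile n (\<lambda>j. 1 - x j) \<longleftrightarrow> profile n x" for x :: "nat \<Rightarrow> real"
    unfolding profile_def by auto
  have "\<forall>i<n. G x i \<le> G y i" if "\<forall>j<n. x j \<le> y j" for x y
    using mono[of "\<lambda>j. 1 - y j" "\<lambda>j. 1 - x j"] that unfolding G_def by auto
  moreover have "profile n (G x)" if "profile n x" for x
    using maps[of "\<lambda>j. 1 - x j"] that reflect[of "F (\<lambda>j. 1 - x j)"] unfolding G_def reflect
    by (simp add: profile_def)
  ultimately obtain y where y: "profile n y" "\<forall>i<n. G y i = y i"
    and greatest: "\<And>x. profile n x \<Longrightarrow> \<forall>i<n. x i \<le> G x i \<Longrightarrow> \<forall>i<n. x i \<le> y i"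
    using monotone_profile_map_greatest_fixpoint[of n G] by blast
  have "\<forall>i<n. 1 - y i \<le> x i" if "profile n x" "\<forall>i<n. F x i \<le> x i" for x
    using greatest[of "\<lambda>j. 1 - x j"] that reflect unfolding G_def by force
  moreover have "profile n (\<lambda>j. 1 - y j)" "\<forall>i<n. F (\<lambda>j. 1 - y j) i = 1 - y i"
    using y reflect unfolding G_def by auto
  ultimately show thesis using that by blast
qed

definition own_grade :: "nat \<Rightarrow> real \<Rightarrow> real \<Rightarrow> real \<Rightarrow> real" where
  "own_grade n m T t = t + max (m - (t + T) / real n) 0"

definition own_payoff :: "nat \<Rightarrow> real \<Rightarrow> real \<Rightarrow> real \<Rightarrow> real \<Rightarrow> real" where
  "own_payoff n a m T t = own_grade n m T t powr a * (1 - t) powr (1 - a)"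

definition best_replies :: "nat \<Rightarrow> real \<Rightarrow> real \<Rightarrow> real \<Rightarrow> real set" where
  "best_replies n a m T = maximizers (own_payoff n a m T) {0..1}"

lemma sum_fun_upd_eq_others_sum:
  assumes "i < n"
  shows "(\<Sum>j<n. (x(i := t)) j) = t + others_sum n x i"
proof -
  have "(\<Sum>j<n. (x(i := t)) j) = t + (\<Sum>j\<in>{..<n} - {i}. (x(i := t)) j)"
    using assms by (subst sum.remove[of "{..<n}" i]) auto
  also have "(\<Sum>j\<in>{..<n} - {i}. (x(i := t)) j) = others_sum n x i"
    unfolding others_sum_def by (intro sum.cong) auto
  finally show ?thesis .
qed

lemma payoff_fun_upd:
  assumes "i < n"
  shows "payoff n \<alpha> m (x(i := t)) i = own_payoff n (\<alpha> i) m (others_sum n x i) t"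
  unfolding payoff_def grade_def mean_eff_def own_payoff_def own_grade_def
    sum_fun_upd_eq_others_sum[OF assms] by simp

lemma others_sum_fun_upd [simp]: "others_sum n (x(i := t)) i = others_sum n x i"
  unfolding others_sum_def by (intro sum.cong) auto

lemma others_sum_mono: "\<forall>j<n. x j \<le> y j \<Longrightarrow> others_sum n x i \<le> others_sum n y i"
  unfolding others_sum_def by (intro sum_mono) auto

lemma is_pure_NE_iff_best_replies:
  "is_pure_NE n \<alpha> m x \<longleftrightarrow>
     profile n x \<and> (\<forall>i<n. x i \<in> best_replies n (\<alpha> i) m (others_sum n x i))"
proof -
  have "payoff n \<alpha> m x i = own_payoff n (\<alpha> i) m (others_sum n x i) (x i)" if "i < n" for i
    using payoff_fun_upd[OF that, of \<alpha> m x "x i"] by simp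
  then show ?thesis
    unfolding is_pure_NE_def best_replies_def maximizers_def profile_def
    by (auto simp: payoff_fun_upd)
qed

lemma payoff_antimono_opponent:
  assumes "j \<noteq> i" "s \<le> t" "0 \<le> x i" "0 \<le> \<alpha> i"
  shows "payoff n \<alpha> m (x(j := t)) i \<le> payoff n \<alpha> m (x(j := s)) i"
proof -
  have "(\<Sum>k<n. (x(j := s)) k) \<le> (\<Sum>k<n. (x(j := t)) k)"
    using assms by (intro sum_mono) auto
  then have "mean_eff n (x(j := s)) \<le> mean_eff n (x(j := t))"
    unfolding mean_eff_def by (simp add: divide_right_mono)
  then have "grade n m (x(j := t)) i \<le> grade n m (x(j := s)) i"
    unfolding grade_def using assms by simp
  moreover have "0 \<le> grade n m (x(j := t)) i"
    unfolding grade_def using assms by simp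
  ultimately show ?thesis
    unfolding payoff_def using assms by (simp add: mult_right_mono powr_mono2)
qed

lemma own_grade_nonneg: "0 \<le> t \<Longrightarrow> 0 \<le> own_grade n m T t"
  unfolding own_grade_def by simp

lemma own_grade_mono:
  assumes "t' \<le> t"
  shows "own_grade n m T t' \<le> own_grade n m T t"
proof -
  have "(t - t') / real n \<le> t - t'" using assms by (simp add: divide_of_nat_le_self)
  then show ?thesis
    unfolding own_grade_def using assms by (auto simp: max_def diff_divide_distrib add_divide_distrib)
qed

lemma own_grade_antimono_others:
  assumes "T \<le> T'"
  shows "own_grade n m T' t \<le> own_grade n m T t"
proof -
  have "(t + T) / real n \<le> (t + T') / real n" using assms by (simp add: divide_right_mono)
  then show ?thesis unfolding own_grade_def by auto
qed

lemma own_grade_decreasing_differences: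
  assumes "t' \<le> t" "T \<le> T'"
  shows "own_grade n m T t - own_grade n m T' t \<le> own_grade n m T t' - own_grade n m T' t'"
  using max_zero_increment_mono[of "m - (t + T') / real n" "m - (t' + T') / real n" "(T' - T) / real n"]
    assms unfolding own_grade_def by (simp add: divide_right_mono diff_divide_distrib add_divide_distrib)

lemma own_grade_log_supermodular:
  assumes "0 \<le> t'" "t' \<le> t" "T \<le> T'"
  shows "own_grade n m T t * own_grade n m T' t' \<le> own_grade n m T' t * own_grade n m T t'"
  using assms by (intro mult_le_mult_of_increments own_grade_nonneg own_grade_mono
      own_grade_antimono_others own_grade_decreasing_differences)

lemma own_payoff_nonneg: "0 \<le> own_payoff n a m T t"
  unfolding own_payoff_def by simp

lemma own_payoff_log_supermodular:
  assumes "0 \<le> a" "0 \<le> t'" "t' \<le> t" "T \<le> T'"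
  shows "own_payoff n a m T t * own_payoff n a m T' t' \<le> own_payoff n a m T' t * own_payoff n a m T t'"
proof -
  let ?G = "own_grade n m"
  have "?G T t powr a * ?G T' t' powr a = (?G T t * ?G T' t') powr a"
    using assms by (simp add: powr_mult own_grade_nonneg)
  also have "\<dots> \<le> (?G T' t * ?G T t') powr a"
    using assms by (intro powr_mono2 own_grade_log_supermodular mult_nonneg_nonneg own_grade_nonneg) auto
  also have "\<dots> = ?G T' t powr a * ?G T t' powr a"
    using assms by (simp add: powr_mult own_grade_nonneg)
  finally have "?G T t powr a * ?G T' t' powr a * ((1 - t) powr (1 - a) * (1 - t') powr (1 - a))
      \<le> ?G T' t powr a * ?G T t' powr a * ((1 - t) powr (1 - a) * (1 - t') powr (1 - a))"
    by (rule mult_right_mono) simp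
  then show ?thesis
    unfolding own_payoff_def by (simp add: ac_simps)
qed

lemma continuous_on_own_payoff:
  assumes "0 < a" "a < 1"
  shows "continuous_on {0..1} (own_payoff n a m T)"
proof -
  have "continuous_on {0..1} (own_grade n m T)"
    unfolding own_grade_def divide_inverse by (intro continuous_intros)
  then show ?thesis
    unfolding own_payoff_def using assms
    by (intro continuous_intros continuous_on_powr') (auto intro: own_grade_nonneg)
qed

lemma own_payoff_pos:
  assumes "0 < a" "a < 1"
  shows "0 < own_payoff n a m T a"
proof -
  have "0 < own_grade n m T a" unfolding own_grade_def using assms by linarith
  then show ?thesis unfolding own_payoff_def using assms by simp
qed

context
  fixes a :: real
  assumes a: "0 < a" "a < 1"
begin

lemma
  shows Sup_best_replies_mem: "Sup (best_replies n a m T) \<in> best_replies n a m T"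
    and Inf_best_replies_mem: "Inf (best_replies n a m T) \<in> best_replies n a m T"
  unfolding best_replies_def using continuous_on_own_payoff[OF a]
  by (auto intro: Sup_maximizers_mem Inf_maximizers_mem)

lemma best_replies_subset: "best_replies n a m T \<subseteq> {0..1}"
  unfolding best_replies_def maximizers_def by auto

lemma le_Sup_best_replies: "t \<in> best_replies n a m T \<Longrightarrow> t \<le> Sup (best_replies n a m T)"
  using best_replies_subset[of n m T] by (intro cSup_upper bdd_aboveI[where M = 1]) auto

lemma Inf_best_replies_le: "t \<in> best_replies n a m T \<Longrightarrow> Inf (best_replies n a m T) \<le> t"
  using best_replies_subset[of n m T] by (intro cInf_lower bdd_belowI[where m = 0]) auto

lemma best_replies_pos:
  assumes "t \<in> best_replies n a m T"
  shows "0 < own_payoff n a m T t"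
proof -
  have "own_payoff n a m T a \<le> own_payoff n a m T t"
    using assms a unfolding best_replies_def maximizers_def by auto
  then show ?thesis using own_payoff_pos[OF a, of n m T] by linarith
qed

lemma best_replies_strong_set_order:
  assumes "T \<le> T'" "t \<in> best_replies n a m T" "t' \<in> best_replies n a m T'"
  shows "max t t' \<in> best_replies n a m T' \<and> min t t' \<in> best_replies n a m T"
  using assms a best_replies_pos[where T = T] best_replies_pos[where T = T'] unfolding best_replies_def
  by (intro maximizers_strong_set_order own_payoff_log_supermodular own_payoff_nonneg) auto

lemma
  assumes "T \<le> T'"
  shows Sup_best_replies_mono: "Sup (best_replies n a m T) \<le> Sup (best_replies n a m T')"
    and Inf_best_replies_mono: "Inf (best_replies n a m T) \<le> Inf (best_replies n a m T')"
proof -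
  have "max (Sup (best_replies n a m T)) (Sup (best_replies n a m T')) \<in> best_replies n a m T'"
    using best_replies_strong_set_order[OF assms Sup_best_replies_mem Sup_best_replies_mem] by blast
  then show "Sup (best_replies n a m T) \<le> Sup (best_replies n a m T')"
    using le_Sup_best_replies by fastforce
  have "min (Inf (best_replies n a m T)) (Inf (best_replies n a m T')) \<in> best_replies n a m T"
    using best_replies_strong_set_order[OF assms Inf_best_replies_mem Inf_best_replies_mem] by blast
  then show "Inf (best_replies n a m T) \<le> Inf (best_replies n a m T')"
    using Inf_best_replies_le by fastforce
qed

end

lemma greatest_pure_NE:
  assumes \<alpha>: "\<forall>i<n. 0 < \<alpha> i \<and> \<alpha> i < 1"
  obtains y where "is_pure_NE n \<alpha> m y" "\<And>x. is_pure_NE n \<alpha> m x \<Longrightarrow> \<forall>i<n. x i \<le> y i"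
proof -
  define F where "F x i = Sup (best_replies n (\<alpha> i) m (others_sum n x i))" for x i
  have reply: "F x i \<in> best_replies n (\<alpha> i) m (others_sum n x i)" if "i < n" for x i
    unfolding F_def using \<alpha> that by (simp add: Sup_best_replies_mem)
  have F_mono: "\<forall>i<n. F x i \<le> F y i" if "\<forall>j<n. x j \<le> y j" for x y
  proof (intro allI impI)
    fix i assume "i < n"
    then show "F x i \<le> F y i"
      unfolding F_def using \<alpha> others_sum_mono[OF that, of i] by (simp add: Sup_best_replies_mono)
  qed
  have F_profile: "profile n (F x)" for x
    unfolding profile_def
  proof (intro allI impI)
    fix i assume "i < n"
    then have "best_replies n (\<alpha> i) m (others_sum n x i) \<subseteq> {0..1}"
      using \<alpha> by (simp add: best_replies_subset)
    then show "0 \<le> F x i \<and> F x i \<le> 1"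
      using reply[OF \<open>i < n\<close>, of x] by auto
  qed
  obtain y where y: "profile n y" "\<forall>i<n. F y i = y i"
    and greatest: "\<And>x. profile n x \<Longrightarrow> \<forall>i<n. x i \<le> F x i \<Longrightarrow> \<forall>i<n. x i \<le> y i"
    by (rule monotone_profile_map_greatest_fixpoint[of n F]) (use F_mono F_profile in auto)
  have "is_pure_NE n \<alpha> m y"
    unfolding is_pure_NE_iff_best_replies
  proof (intro conjI allI impI)
    fix i assume "i < n"
    then show "y i \<in> best_replies n (\<alpha> i) m (others_sum n y i)"
      using reply[OF \<open>i < n\<close>, of y] y(2) by simp
  qed (fact y(1))
  moreover have "\<forall>i<n. x i \<le> y i" if "is_pure_NE n \<alpha> m x" for x
  proof (rule greatest)
    show "profile n x" using that unfolding is_pure_NE_iff_best_replies by blast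
    show "\<forall>i<n. x i \<le> F x i"
      using that \<alpha> unfolding is_pure_NE_iff_best_replies F_def by (simp add: le_Sup_best_replies)
  qed
  ultimately show thesis using that by blast
qed

lemma least_pure_NE:
  assumes \<alpha>: "\<forall>i<n. 0 < \<alpha> i \<and> \<alpha> i < 1"
  obtains w where "is_pure_NE n \<alpha> m w" "\<And>x. is_pure_NE n \<alpha> m x \<Longrightarrow> \<forall>i<n. w i \<le> x i"
proof -
  define F where "F x i = Inf (best_replies n (\<alpha> i) m (others_sum n x i))" for x i
  have reply: "F x i \<in> best_replies n (\<alpha> i) m (others_sum n x i)" if "i < n" for x i
    unfolding F_def using \<alpha> that by (simp add: Inf_best_replies_mem)
  have F_mono: "\<forall>i<n. F x i \<le> F y i" if "\<forall>j<n. x j \<le> y j" for x y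
  proof (intro allI impI)
    fix i assume "i < n"
    then show "F x i \<le> F y i"
      unfolding F_def using \<alpha> others_sum_mono[OF that, of i] by (simp add: Inf_best_replies_mono)
  qed
  have F_profile: "profile n (F x)" for x
    unfolding profile_def
  proof (intro allI impI)
    fix i assume "i < n"
    then have "best_replies n (\<alpha> i) m (others_sum n x i) \<subseteq> {0..1}"
      using \<alpha> by (simp add: best_replies_subset)
    then show "0 \<le> F x i \<and> F x i \<le> 1"
      using reply[OF \<open>i < n\<close>, of x] by auto
  qed
  obtain w where w: "profile n w" "\<forall>i<n. F w i = w i"
    and least: "\<And>x. profile n x \<Longrightarrow> \<forall>i<n. F x i \<le> x i \<Longrightarrow> \<forall>i<n. w i \<le> x i"
    by (rule monotone_profile_map_least_fixpoint[of n F]) (use F_mono F_profile in auto)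
  have "is_pure_NE n \<alpha> m w"
    unfolding is_pure_NE_iff_best_replies
  proof (intro conjI allI impI)
    fix i assume "i < n"
    then show "w i \<in> best_replies n (\<alpha> i) m (others_sum n w i)"
      using reply[OF \<open>i < n\<close>, of w] w(2) by simp
  qed (fact w(1))
  moreover have "\<forall>i<n. w i \<le> x i" if "is_pure_NE n \<alpha> m x" for x
  proof (rule least)
    show "profile n x" using that unfolding is_pure_NE_iff_best_replies by blast
    show "\<forall>i<n. F x i \<le> x i"
      using that \<alpha> unfolding is_pure_NE_iff_best_replies F_def by (simp add: Inf_best_replies_le)
  qed
  ultimately show thesis using that by blast
qed

theorem mainTheorem2:
  fixes n :: nat and \<alpha> :: "nat \<Rightarrow> real" and m :: real
  assumes "n \<ge> 2"
    and "\<forall>i<n. 0 < \<alpha> i \<and> \<alpha> i < 1"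
    and "0 < m" and "m < 1"
  shows "(\<forall>x i j s t. profile n x \<and> i < n \<and> j < n \<and> j \<noteq> i
            \<and> s \<in> {0..1} \<and> t \<in> {0..1} \<and> s \<le> t
            \<longrightarrow> payoff n \<alpha> m (x(j := t)) i \<le> payoff n \<alpha> m (x(j := s)) i)
       \<and> (\<exists>x. is_pure_NE n \<alpha> m x)
       \<and> (\<exists>xs ys. is_pure_NE n \<alpha> m xs \<and> is_pure_NE n \<alpha> m ys \<and>
            (\<forall>xe. is_pure_NE n \<alpha> m xe \<longrightarrow> (\<forall>i<n. xs i \<le> xe i \<and> xe i \<le> ys i)))"
proof -
  have spillover: "payoff n \<alpha> m (x(j := t)) i \<le> payoff n \<alpha> m (x(j := s)) i"
    if "profile n x" "i < n" "j \<noteq> i" "s \<le> t" for x i j s t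
    using that assms(2) by (intro payoff_antimono_opponent) (auto simp: profile_def less_imp_le)
  obtain xs where "is_pure_NE n \<alpha> m xs" "\<And>x. is_pure_NE n \<alpha> m x \<Longrightarrow> \<forall>i<n. xs i \<le> x i"
    using least_pure_NE[OF assms(2)] by blast
  moreover obtain ys where "is_pure_NE n \<alpha> m ys" "\<And>x. is_pure_NE n \<alpha> m x \<Longrightarrow> \<forall>i<n. x i \<le> ys i"
    using greatest_pure_NE[OF assms(2)] by blast
  ultimately show ?thesis
    using spillover by blast
qed

end
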